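(* Let $(S,\le)$ be a continuous dcwo. For any Scott-closed subset $F$ of $S$, the set $\operatorname{Max}F$ of maximal elements of $F$ is finite and $F=\downarrow\operatorname{Max}F$.
   Context: A continuous dcwo is a partial order $(S,\le)$ which is well (well-founded, no infinite antichain), a dcpo (every directed subset $D$, i.e. nonempty with pairwise upper bounds in $D$, has a least upper bound), and continuous (for every $x$, $\{y\mid y\ll x\}$ is directed with lub $x$, where $y\ll x$ iff every directed $D$ with $x\le\bigvee D$ contains an element $z\ge y$). A set is Scott-open if it is upward-closed and meets every directed set whose lub it contains; Scott-closed sets are complements of Scott-open sets. *)

theory Defs
  imports Main
begin

text \<open>The poset (S, \<le>) is the carrier type of a type of class order.\<close>

definition directed :: "'a::order set \<Rightarrow> bool" where
  "directed D \<longleftrightarrow> D \<noteq> {} \<and> (\<forall>x\<in>D. \<forall>y\<in>D. \<exists>z\<in>D. x \<le> z \<and> y \<le> z)"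

definition is_lub :: "'a::order set \<Rightarrow> 'a \<Rightarrow> bool" where
  "is_lub D s \<longleftrightarrow> (\<forall>d\<in>D. d \<le> s) \<and> (\<forall>u. (\<forall>d\<in>D. d \<le> u) \<longrightarrow> s \<le> u)"

definition antichain_set :: "'a::order set \<Rightarrow> bool" where
  "antichain_set A \<longleftrightarrow> (\<forall>a\<in>A. \<forall>b\<in>A. a \<le> b \<longrightarrow> a = b)"

definition well_po :: "'a::order itself \<Rightarrow> bool" where
  "well_po _ \<longleftrightarrow> wf {(x::'a, y). x < y} \<and> (\<forall>A::'a set. antichain_set A \<longrightarrow> finite A)"

definition dcpo :: "'a::order itself \<Rightarrow> bool" where
  "dcpo _ \<longleftrightarrow> (\<forall>D::'a set. directed D \<longrightarrow> (\<exists>s. is_lub D s))"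

definition way_below :: "'a::order \<Rightarrow> 'a \<Rightarrow> bool" where
  "way_below y x \<longleftrightarrow> (\<forall>D s. directed D \<longrightarrow> is_lub D s \<longrightarrow> x \<le> s \<longrightarrow> (\<exists>z\<in>D. y \<le> z))"

definition continuous_po :: "'a::order itself \<Rightarrow> bool" where
  "continuous_po _ \<longleftrightarrow> (\<forall>x::'a. directed {y. way_below y x} \<and> is_lub {y. way_below y x} x)"

definition continuous_dcwo :: "'a::order itself \<Rightarrow> bool" where
  "continuous_dcwo T \<longleftrightarrow> well_po T \<and> dcpo T \<and> continuous_po T"

definition scott_open :: "'a::order set \<Rightarrow> bool" where
  "scott_open U \<longleftrightarrow> (\<forall>x y. x \<in> U \<longrightarrow> x \<le> y \<longrightarrow> y \<in> U) \<and>
     (\<forall>D s. directed D \<longrightarrow> is_lub D s \<longrightarrow> s \<in> U \<longrightarrow> D \<inter> U \<noteq> {})"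

definition scott_closed :: "'a::order set \<Rightarrow> bool" where
  "scott_closed F \<longleftrightarrow> scott_open (- F)"

definition maximals :: "'a::order set \<Rightarrow> 'a set" where
  "maximals F = {x \<in> F. \<forall>y\<in>F. x \<le> y \<longrightarrow> y = x}"

definition downset :: "'a::order set \<Rightarrow> 'a set" where
  "downset A = {x. \<exists>a\<in>A. x \<le> a}"

end

theory Submission
  imports Defs
begin

text \<open>Maximal elements of any set form an antichain, so in a well partial order there are only
  finitely many. A Scott-closed set is a down-set closed under directed lubs; in a dcpo every
  chain in it therefore has an upper bound in it, and Zorn's lemma puts a maximal element of
  the set above each of its points.\<close>

lemma antichain_maximals: "antichain_set (maximals A)"
  unfolding antichain_set_def maximals_def by auto

lemma finite_maximals_if_well_po:
  fixes A :: "'a::order set"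
  assumes "well_po TYPE('a)"
  shows "finite (maximals A)"
  using assms antichain_maximals unfolding well_po_def by blast

lemma scott_closed_downward:
  assumes "scott_closed F" "y \<in> F" "x \<le> y"
  shows "x \<in> F"
  using assms unfolding scott_closed_def scott_open_def by blast

lemma scott_closed_lub_closed:
  assumes "scott_closed F" "directed D" "D \<subseteq> F" "is_lub D s"
  shows "s \<in> F"
  using assms unfolding scott_closed_def scott_open_def by blast

lemma directed_if_Chains:
  assumes "C \<in> Chains (relation_of (\<le>) A)" "C \<noteq> {}"
  shows "directed C"
  using assms unfolding directed_def Chains_def relation_of_def by blast

lemma dcpo_exists_maximal_above:
  fixes F :: "'a::order set"
  assumes dcpo: "dcpo TYPE('a)"
    and lub_closed: "\<And>D s. directed D \<Longrightarrow> D \<subseteq> F \<Longrightarrow> is_lub D s \<Longrightarrow> s \<in> F"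
    and "x \<in> F"
  shows "\<exists>m\<in>maximals F. x \<le> m"
proof -
  define A where "A = {y \<in> F. x \<le> y}"
  have po: "partial_order_on A (relation_of (\<le>) A)"
    by (rule partial_order_on_relation_ofI) auto
  have "\<exists>m\<in>A. \<forall>a\<in>A. m \<le> a \<longrightarrow> a = m"
  proof (rule predicate_Zorn[OF po])
    fix C assume C: "C \<in> Chains (relation_of (\<le>) A)"
    have CA: "C \<subseteq> A" using Chains_relation_of[OF C] .
    show "\<exists>u\<in>A. \<forall>a\<in>C. a \<le> u"
    proof (cases "C = {}")
      case True
      then show ?thesis using \<open>x \<in> F\<close> unfolding A_def by auto
    next
      case False
      then have "directed C" using directed_if_Chains[OF C] by blast
      then obtain s where s: "is_lub C s" using dcpo unfolding dcpo_def by blast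
      have "s \<in> F" using lub_closed[OF \<open>directed C\<close> _ s] CA unfolding A_def by auto
      moreover obtain c where "c \<in> C" using False by blast
      then have "x \<le> s" using CA s unfolding A_def is_lub_def by (auto intro: order_trans)
      ultimately have "s \<in> A" unfolding A_def by auto
      then show ?thesis using s unfolding is_lub_def by blast
    qed
  qed
  then obtain m where "m \<in> A" and "\<forall>a\<in>A. m \<le> a \<longrightarrow> a = m" by blast
  then have "m \<in> maximals F"
    unfolding maximals_def A_def by (auto intro: order_trans)
  with \<open>m \<in> A\<close> show ?thesis unfolding A_def by auto
qed

theorem lemma3p5:
  fixes F :: "'a::order set"
  assumes "continuous_dcwo TYPE('a)"
    and "scott_closed F"
  shows "finite (maximals F) \<and> F = downset (maximals F)"
proof -
  have well: "well_po TYPE('a)" and dcpo: "dcpo TYPE('a)"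
    using assms(1) unfolding continuous_dcwo_def by auto
  have "F \<subseteq> downset (maximals F)"
    using dcpo_exists_maximal_above[OF dcpo scott_closed_lub_closed[OF assms(2)]]
    unfolding downset_def by (auto simp: less_eq_set_def)
  moreover have "downset (maximals F) \<subseteq> F"
    using scott_closed_downward[OF assms(2)] unfolding downset_def maximals_def by auto
  ultimately show ?thesis using finite_maximals_if_well_po[OF well] by blast
qed

end
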